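(* Let $k\ge1$ and $B>0$ be constants and let $F=(F_L,F_R)$ be as defined below. Then $F$ is monotonically nondecreasing on $[0,1]^2$: if $(\alpha_L,\alpha_R),(\alpha_L',\alpha_R')\in[0,1]^2$ with $\alpha_L\le\alpha_L'$ and $\alpha_R\le\alpha_R'$, then $F_L(\alpha_L,\alpha_R)\le F_L(\alpha_L',\alpha_R')$ and $F_R(\alpha_L,\alpha_R)\le F_R(\alpha_L',\alpha_R')$. In particular, at every point with $\sqrt{\alpha_L\alpha_R}B>1$, one has $1-(1-\theta_L)(1-\theta_R)B^2\alpha_L\alpha_R>0$, where $(\theta_L,\theta_R)$ is as in the definition of $F$.
   Context: The map $F$: for $(\alpha_L,\alpha_R)\in[0,1]^2$, if $\sqrt{\alpha_L\alpha_R}\,B\le1$ set $(\theta_L,\theta_R)=(0,0)$; otherwise let $(\theta_L,\theta_R)$ be the unique solution with $\theta_L,\theta_R>0$ of $\exp(-B\sqrt k\,\alpha_R\theta_R)=1-\theta_L$ and $\exp(-\frac{B}{\sqrt k}\alpha_L\theta_L)=1-\theta_R$. Then $F(\alpha_L,\alpha_R)=\big(\tfrac12(1+\theta_L\alpha_L),\tfrac12(1+\theta_R\alpha_R)\big)$. *)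

theory Defs
  imports "HOL-Analysis.Analysis"
begin

definition theta_eqs :: "real \<Rightarrow> real \<Rightarrow> real \<Rightarrow> real \<Rightarrow> real \<Rightarrow> real \<Rightarrow> bool" where
  "theta_eqs k B aL aR tL tR \<longleftrightarrow>
     tL > 0 \<and> tR > 0 \<and>
     exp (- B * sqrt k * aR * tR) = 1 - tL \<and>
     exp (- (B / sqrt k) * aL * tL) = 1 - tR"

definition theta :: "real \<Rightarrow> real \<Rightarrow> real \<Rightarrow> real \<Rightarrow> real \<times> real" where
  "theta k B aL aR =
     (if sqrt (aL * aR) * B \<le> 1 then (0, 0)
      else (THE p. theta_eqs k B aL aR (fst p) (snd p)))"

definition F_map :: "real \<Rightarrow> real \<Rightarrow> real \<Rightarrow> real \<Rightarrow> real \<times> real" where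
  "F_map k B aL aR =
     (let (tL, tR) = theta k B aL aR in ((1 + tL * aL) / 2, (1 + tR * aR) / 2))"

end

theory Submission
  imports Defs
begin

text \<open>
  Write \<open>sat a x = 1 - exp (-a x)\<close>, \<open>A = B \<surd>k \<alpha>\<^sub>R\<close> and \<open>C = B \<alpha>\<^sub>L / \<surd>k\<close>. The defining equations
  say \<open>\<theta>\<^sub>L = sat A \<theta>\<^sub>R\<close> and \<open>\<theta>\<^sub>R = sat C \<theta>\<^sub>L\<close>, so \<open>\<theta>\<^sub>L\<close> is a positive fixed point of
  \<open>G = sat A \<circ> sat C\<close>. With the chord slope \<open>c t = (1 - exp (-t)) / t\<close>, which is strictly
  decreasing on \<open>t > 0\<close>, one has \<open>G x = x \<cdot> A C c (A sat C x) c (C x)\<close>, and the factor after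
  \<open>x\<close> is strictly decreasing in \<open>x\<close>. Hence the positive fixed point is unique (it exists
  when \<open>A C > 1\<close> by the intermediate value theorem) and \<open>G x < x\<close> beyond it. Since \<open>G\<close>
  increases with \<open>A\<close> and \<open>C\<close>, the fixed point, and with it \<open>F\<close>, is monotone in
  \<open>(\<alpha>\<^sub>L, \<alpha>\<^sub>R)\<close>. Finally \<open>G' x = A C exp (-C x) exp (-A sat C x)\<close> is smaller than the same
  expression with each \<open>exp (-t)\<close> replaced by \<open>c t\<close>, which equals 1 at the fixed point; at
  \<open>x = \<theta>\<^sub>L\<close> this is the inequality \<open>(1 - \<theta>\<^sub>L) (1 - \<theta>\<^sub>R) B\<^sup>2 \<alpha>\<^sub>L \<alpha>\<^sub>R < 1\<close>.
\<close>

definition exp_chord :: "real \<Rightarrow> real" where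
  "exp_chord t = (1 - exp (-t)) / t"

lemma exp_chord_pos: "t > 0 \<Longrightarrow> exp_chord t > 0"
  unfolding exp_chord_def by simp

lemma exp_neg_less_exp_chord:
  fixes t :: real
  assumes "t > 0"
  shows "exp (-t) < exp_chord t"
proof -
  have "1 + t < exp t"
    using exp_minus_greater[of "-t"] assms by simp
  then have "(1 + t) * exp (-t) < exp t * exp (-t)"
    by simp
  then have "t * exp (-t) < 1 - exp (-t)"
    by (simp add: exp_minus_inverse algebra_simps)
  then show ?thesis
    using assms by (simp add: exp_chord_def field_simps)
qed

lemma exp_chord_strict_antimono:
  fixes s t :: real
  assumes "0 < s" "s < t"
  shows "exp_chord t < exp_chord s"
proof (rule DERIV_neg_imp_decreasing[OF assms(2)])
  fix x
  assume "s \<le> x" "x \<le> t"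
  then have "x > 0" using assms by simp
  have "(exp_chord has_real_derivative (exp (-x) - exp_chord x) / x) (at x)"
    unfolding exp_chord_def[abs_def] using \<open>x > 0\<close>
    by (auto intro!: derivative_eq_intros simp: power2_eq_square field_simps)
  moreover have "(exp (-x) - exp_chord x) / x < 0"
    using exp_neg_less_exp_chord[OF \<open>x > 0\<close>] \<open>x > 0\<close> by (simp add: divide_neg_pos)
  ultimately show "\<exists>y. DERIV exp_chord x :> y \<and> y < 0"
    by blast
qed

definition sat :: "real \<Rightarrow> real \<Rightarrow> real" where
  "sat a x = 1 - exp (-(a * x))"

lemma one_minus_sat: "1 - sat a x = exp (-(a * x))"
  unfolding sat_def by simp

lemma sat_pos: "a > 0 \<Longrightarrow> x > 0 \<Longrightarrow> sat a x > 0"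
  unfolding sat_def by simp

lemma sat_less_1: "sat a x < 1"
  unfolding sat_def by simp

lemma sat_mono:
  assumes "0 \<le> a" "a \<le> a'" "0 \<le> x" "x \<le> x'"
  shows "sat a x \<le> sat a' x'"
  unfolding sat_def using assms by (simp add: mult_mono)

lemma sat_strict_mono: "a > 0 \<Longrightarrow> x < x' \<Longrightarrow> sat a x < sat a x'"
  unfolding sat_def by simp

lemma sat_eq_exp_chord: "a * x > 0 \<Longrightarrow> sat a x = a * x * exp_chord (a * x)"
  unfolding sat_def exp_chord_def by simp

definition fixed_point_ratio :: "real \<Rightarrow> real \<Rightarrow> real \<Rightarrow> real" where
  "fixed_point_ratio a b x = a * b * exp_chord (a * sat b x) * exp_chord (b * x)"

lemma sat_sat_eq_ratio:
  assumes "a > 0" "b > 0" "x > 0"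
  shows "sat a (sat b x) = x * fixed_point_ratio a b x"
proof -
  have "sat b x > 0" using assms sat_pos by blast
  then show ?thesis
    using assms by (simp add: fixed_point_ratio_def sat_eq_exp_chord[of b x] sat_eq_exp_chord[of a])
qed

lemma fixed_point_ratio_strict_antimono:
  assumes "a > 0" "b > 0" "0 < x" "x < y"
  shows "fixed_point_ratio a b y < fixed_point_ratio a b x"
proof -
  have "0 < sat b x" "sat b x < sat b y"
    using assms by (auto intro: sat_pos sat_strict_mono)
  then have "exp_chord (a * sat b y) < exp_chord (a * sat b x)" "exp_chord (b * y) < exp_chord (b * x)"
    using assms by (simp_all add: exp_chord_strict_antimono)
  moreover have "exp_chord (a * sat b y) > 0" "exp_chord (b * y) > 0"
    using assms \<open>sat b x < sat b y\<close> \<open>0 < sat b x\<close> by (simp_all add: exp_chord_pos)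
  ultimately have "exp_chord (a * sat b y) * exp_chord (b * y) < exp_chord (a * sat b x) * exp_chord (b * x)"
    by (intro mult_strict_mono) auto
  then show ?thesis
    using assms by (simp add: fixed_point_ratio_def mult.assoc)
qed

lemma sat_sat_fixed_point_exists:
  assumes "a > 0" "b > 0" "a * b > 1"
  shows "\<exists>x>0. sat a (sat b x) = x"
proof -
  define P where "P x = sat a (sat b x) - x" for x
  have "DERIV P 0 :> a * b - 1"
    unfolding P_def[abs_def] sat_def by (auto intro!: derivative_eq_intros)
  moreover have "a * b - 1 > 0"
    using assms(3) by simp
  ultimately obtain d where "d > 0" and d: "\<And>h. 0 < h \<Longrightarrow> h < d \<Longrightarrow> P 0 < P (0 + h)"
    by (blast dest: DERIV_pos_inc_right)
  define e where "e = min (d / 2) 1"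
  have "0 < e" "e \<le> 1"
    using \<open>d > 0\<close> by (simp_all add: e_def)
  moreover have "P e > 0"
    using d[of e] \<open>d > 0\<close> by (simp add: e_def P_def sat_def)
  moreover have "P 1 < 0"
    using sat_less_1 by (simp add: P_def)
  moreover have "continuous_on {e..1} P"
    unfolding P_def[abs_def] sat_def by (intro continuous_intros)
  ultimately obtain x where "e \<le> x" "P x = 0"
    using IVT2'[of P 1 0 e] by auto
  then show ?thesis
    using \<open>e > 0\<close> by (intro exI[of _ x]) (simp add: P_def)
qed

lemma sat_sat_fixed_point_ratio:
  assumes "a > 0" "b > 0" "x > 0" "sat a (sat b x) = x"
  shows "fixed_point_ratio a b x = 1"
  using sat_sat_eq_ratio[OF assms(1-3)] assms(3,4) by simp

lemma sat_sat_less_beyond_fixed_point: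
  assumes "a > 0" "b > 0" "x > 0" "sat a (sat b x) = x" "x < y"
  shows "sat a (sat b y) < y"
proof -
  have "fixed_point_ratio a b y < 1"
    using fixed_point_ratio_strict_antimono[OF assms(1-3,5)] sat_sat_fixed_point_ratio[OF assms(1-4)]
    by simp
  then show ?thesis
    using sat_sat_eq_ratio[OF assms(1,2), of y] assms(3,5) by simp
qed

lemma sat_sat_fixed_point_unique:
  assumes "a > 0" "b > 0" "x > 0" "sat a (sat b x) = x" "y > 0" "sat a (sat b y) = y"
  shows "x = y"
  using sat_sat_less_beyond_fixed_point[OF assms(1-4), of y]
    sat_sat_less_beyond_fixed_point[OF assms(1,2,5,6), of x] assms(4,6)
  by (cases x y rule: linorder_cases) auto

lemma sat_sat_fixed_point_mono:
  assumes "a > 0" "b > 0" "a \<le> a'" "b \<le> b'"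
    and "x > 0" "sat a (sat b x) = x" "x' > 0" "sat a' (sat b' x') = x'"
  shows "x \<le> x'"
proof (rule ccontr)
  assume "\<not> x \<le> x'"
  then have "sat a' (sat b' x) < x"
    using sat_sat_less_beyond_fixed_point[of a' b' x' x] assms(1-4,7,8) by simp
  moreover have "sat a (sat b x) \<le> sat a' (sat b' x)"
  proof (rule sat_mono)
    show "0 \<le> sat b x" "sat b x \<le> sat b' x"
      using assms(2,4,5) sat_pos[of b x] by (simp_all add: sat_mono)
  qed (use assms(1,3) in simp_all)
  ultimately show False
    using assms(6) by simp
qed

text \<open>The left-hand side is the derivative of \<open>sat a \<circ> sat b\<close> at \<open>x\<close>.\<close>

lemma sat_sat_fixed_point_slope_less_1:
  assumes "a > 0" "b > 0" "x > 0" "sat a (sat b x) = x"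
  shows "a * b * (1 - sat b x) * (1 - sat a (sat b x)) < 1"
proof -
  have "sat b x > 0" using assms sat_pos by blast
  have "exp (-(b * x)) < exp_chord (b * x)" "exp (-(a * sat b x)) < exp_chord (a * sat b x)"
    using assms \<open>sat b x > 0\<close> by (simp_all add: exp_neg_less_exp_chord)
  moreover have "exp_chord (b * x) > 0"
    using assms by (simp add: exp_chord_pos)
  ultimately have "exp (-(b * x)) * exp (-(a * sat b x)) < exp_chord (b * x) * exp_chord (a * sat b x)"
    by (simp add: mult_strict_mono)
  then have "a * b * (exp (-(b * x)) * exp (-(a * sat b x))) < fixed_point_ratio a b x"
    unfolding fixed_point_ratio_def using assms(1,2) by (simp add: mult.commute mult.left_commute)
  also have "\<dots> = 1"
    using sat_sat_fixed_point_ratio[OF assms] .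
  finally show ?thesis
    by (simp add: one_minus_sat mult.assoc)
qed

lemma theta_eqs_iff_sat:
  "theta_eqs k B aL aR u v \<longleftrightarrow>
     u > 0 \<and> v > 0 \<and> u = sat (B * sqrt k * aR) v \<and> v = sat (B / sqrt k * aL) u"
  unfolding theta_eqs_def sat_def by auto

lemma supercritical_iff:
  fixes B aL aR :: real
  assumes "B > 0" "aL \<ge> 0" "aR \<ge> 0"
  shows "sqrt (aL * aR) * B > 1 \<longleftrightarrow> B\<^sup>2 * aL * aR > 1"
proof -
  have "sqrt (aL * aR) * B = sqrt (B\<^sup>2 * aL * aR)"
    using assms by (simp add: real_sqrt_mult ac_simps)
  then show ?thesis by simp
qed

lemma theta_eq_fixed_point:
  fixes k B aL aR x :: real
  defines "A \<equiv> B * sqrt k * aR" and "C \<equiv> B / sqrt k * aL"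
  assumes "A > 0" "C > 0" "sqrt (aL * aR) * B > 1" "x > 0" "sat A (sat C x) = x"
  shows "theta k B aL aR = (x, sat C x)"
proof -
  have "p = (x, sat C x)" if "theta_eqs k B aL aR (fst p) (snd p)" for p
  proof -
    have "fst p > 0" "fst p = sat A (snd p)" "snd p = sat C (fst p)"
      using that unfolding theta_eqs_iff_sat A_def C_def by blast+
    then have "fst p = x"
      using sat_sat_fixed_point_unique[OF assms(3,4)] assms(6,7) by metis
    with \<open>snd p = sat C (fst p)\<close> show ?thesis
      by (simp add: prod_eq_iff)
  qed
  moreover have "theta_eqs k B aL aR x (sat C x)"
    unfolding theta_eqs_iff_sat using assms(4,6,7) sat_pos by (simp add: A_def C_def)
  ultimately have "(THE p. theta_eqs k B aL aR (fst p) (snd p)) = (x, sat C x)"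
    by (intro the_equality) simp_all
  then show ?thesis
    using assms(5) by (simp add: theta_def)
qed

lemma theta_supercritical:
  fixes k B aL aR :: real
  defines "A \<equiv> B * sqrt k * aR" and "C \<equiv> B / sqrt k * aL"
  assumes "k > 0" "B > 0" "aL \<ge> 0" "aR \<ge> 0" "sqrt (aL * aR) * B > 1"
  obtains x where "x > 0" "sat A (sat C x) = x" "theta k B aL aR = (x, sat C x)"
    and "A > 0" "C > 0" "A * C = B\<^sup>2 * aL * aR"
proof -
  have "B\<^sup>2 * aL * aR > 1"
    using supercritical_iff assms(4-7) by blast
  then have "aL * aR > 0"
    by (metis mult.assoc mult_le_0_iff not_less zero_le_power2 zero_less_one order.strict_trans)
  then have "aL > 0" "aR > 0"
    using assms(5,6) by (auto simp: zero_less_mult_iff)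
  then have "A > 0" "C > 0"
    using assms(3,4) by (simp_all add: A_def C_def)
  moreover have "A * C = B\<^sup>2 * aL * aR"
    using assms(3) by (simp add: A_def C_def power2_eq_square)
  ultimately obtain x where "x > 0" "sat A (sat C x) = x"
    using sat_sat_fixed_point_exists \<open>B\<^sup>2 * aL * aR > 1\<close> by metis
  moreover from this have "theta k B aL aR = (x, sat C x)"
    using theta_eq_fixed_point[where k = k and B = B and aL = aL and aR = aR, folded A_def C_def] \<open>A > 0\<close> \<open>C > 0\<close> assms(7)
    by blast
  ultimately show ?thesis
    using that \<open>A > 0\<close> \<open>C > 0\<close> \<open>A * C = B\<^sup>2 * aL * aR\<close> by blast
qed

lemma theta_nonneg:
  assumes "k > 0" "B > 0" "aL \<ge> 0" "aR \<ge> 0"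
  shows "fst (theta k B aL aR) \<ge> 0 \<and> snd (theta k B aL aR) \<ge> 0"
proof (cases "sqrt (aL * aR) * B > 1")
  case True
  then obtain x where "x > 0" "theta k B aL aR = (x, sat (B / sqrt k * aL) x)" "B / sqrt k * aL > 0"
    using theta_supercritical[OF assms] by blast
  then show ?thesis
    by (simp add: sat_pos less_imp_le)
qed (simp add: theta_def)

lemma theta_mono:
  assumes "k > 0" "B > 0" "0 \<le> aL" "aL \<le> aL'" "0 \<le> aR" "aR \<le> aR'"
  shows "fst (theta k B aL aR) \<le> fst (theta k B aL' aR') \<and>
         snd (theta k B aL aR) \<le> snd (theta k B aL' aR')"
proof (cases "sqrt (aL * aR) * B > 1")
  case False
  then show ?thesis
    using theta_nonneg[of k B aL' aR'] assms by (simp add: theta_def)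
next
  case True
  define A C A' C' where "A = B * sqrt k * aR" and "C = B / sqrt k * aL"
    and "A' = B * sqrt k * aR'" and "C' = B / sqrt k * aL'"
  have "A \<le> A'" "C \<le> C'"
    using assms by (simp_all add: A_def A'_def C_def C'_def mult_left_mono divide_right_mono)
  have "sqrt (aL * aR) * B \<le> sqrt (aL' * aR') * B"
    using assms by (simp add: mult_mono)
  then have "sqrt (aL' * aR') * B > 1"
    using True by linarith
  then obtain x' where "x' > 0" "sat A' (sat C' x') = x'" "theta k B aL' aR' = (x', sat C' x')"
    using theta_supercritical[of k B aL' aR'] assms unfolding A'_def C'_def by auto
  obtain x where "x > 0" "sat A (sat C x) = x" "theta k B aL aR = (x, sat C x)" "A > 0" "C > 0"
    using theta_supercritical[OF assms(1,2,3,5) True] unfolding A_def C_def by blast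
  then have "x \<le> x'"
    using sat_sat_fixed_point_mono \<open>A \<le> A'\<close> \<open>C \<le> C'\<close> \<open>x' > 0\<close> \<open>sat A' (sat C' x') = x'\<close>
    by blast
  moreover have "sat C x \<le> sat C' x'"
    using \<open>x \<le> x'\<close> \<open>x > 0\<close> \<open>C > 0\<close> \<open>C \<le> C'\<close> by (simp add: sat_mono)
  ultimately show ?thesis
    using \<open>theta k B aL aR = _\<close> \<open>theta k B aL' aR' = _\<close> by simp
qed

lemma theta_slope_bound:
  assumes "k > 0" "B > 0" "aL \<ge> 0" "aR \<ge> 0" "sqrt (aL * aR) * B > 1"
  shows "(1 - fst (theta k B aL aR)) * (1 - snd (theta k B aL aR)) * B\<^sup>2 * aL * aR < 1"
proof -
  define A C where "A = B * sqrt k * aR" and "C = B / sqrt k * aL"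
  obtain x where "x > 0" "sat A (sat C x) = x" "theta k B aL aR = (x, sat C x)"
    and "A > 0" "C > 0" "A * C = B\<^sup>2 * aL * aR"
    using theta_supercritical[OF assms] unfolding A_def C_def by blast
  moreover from this have "A * C * (1 - sat C x) * (1 - x) < 1"
    using sat_sat_fixed_point_slope_less_1[of A C x] by simp
  ultimately show ?thesis
    by (simp add: ac_simps)
qed

lemma F_map_eq:
  "F_map k B aL aR = ((1 + fst (theta k B aL aR) * aL) / 2, (1 + snd (theta k B aL aR) * aR) / 2)"
  by (simp add: F_map_def case_prod_beta)

theorem mainTheorem11:
  fixes k B :: real
  assumes "k \<ge> 1" and "B > 0"
  shows "(\<forall>aL aR aL' aR'.
            aL \<in> {0..1} \<and> aR \<in> {0..1} \<and> aL' \<in> {0..1} \<and> aR' \<in> {0..1} \<and>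
            aL \<le> aL' \<and> aR \<le> aR' \<longrightarrow>
              fst (F_map k B aL aR) \<le> fst (F_map k B aL' aR') \<and>
              snd (F_map k B aL aR) \<le> snd (F_map k B aL' aR'))
       \<and> (\<forall>aL aR. aL \<in> {0..1} \<and> aR \<in> {0..1} \<and> sqrt (aL * aR) * B > 1 \<longrightarrow>
            1 - (1 - fst (theta k B aL aR)) * (1 - snd (theta k B aL aR)) * B\<^sup>2 * aL * aR > 0)"
proof (intro conjI allI impI; elim conjE)
  fix aL aR aL' aR' :: real
  assume "aL \<in> {0..1}" "aR \<in> {0..1}" "aL \<le> aL'" "aR \<le> aR'"
  moreover have "k > 0"
    using assms(1) by simp
  ultimately have "0 \<le> fst (theta k B aL aR) \<and> 0 \<le> snd (theta k B aL aR)"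
    and "fst (theta k B aL aR) \<le> fst (theta k B aL' aR') \<and>
         snd (theta k B aL aR) \<le> snd (theta k B aL' aR')"
    using theta_nonneg theta_mono assms(2) by simp_all
  then show "fst (F_map k B aL aR) \<le> fst (F_map k B aL' aR')"
    and "snd (F_map k B aL aR) \<le> snd (F_map k B aL' aR')"
    using \<open>aL \<in> {0..1}\<close> \<open>aR \<in> {0..1}\<close> \<open>aL \<le> aL'\<close> \<open>aR \<le> aR'\<close>
    by (simp_all add: F_map_eq mult_mono)
next
  fix aL aR :: real
  assume "aL \<in> {0..1}" "aR \<in> {0..1}" "sqrt (aL * aR) * B > 1"
  then show "1 - (1 - fst (theta k B aL aR)) * (1 - snd (theta k B aL aR)) * B\<^sup>2 * aL * aR > 0"
    using theta_slope_bound[of k B aL aR] assms by simp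
qed

end
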